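(* Let $\|\cdot\|$ be a norm on $\mathbb{R}^n$ and let $\Phi\subset\mathbb{R}^n$ be a set of functions such that, for some strictly increasing function $c:(0,1]\to(0,1]$: (i) $\Phi$ contains the constant function $\mathbf 1$, $\Phi=-\Phi$, $\|\phi\|_\infty\le1$ for every $\phi\in\Phi$, and the linear span of $\Phi$ is $\mathbb{R}^n$; (ii) $\langle f,\phi\rangle\le1$ for every $f$ with $\|f\|\le1$ and every $\phi\in\Phi$; (iii) if $\|f\|_\infty\le1$ and $\|f\|\ge\epsilon$ then there exists $\phi\in\Phi$ with $\langle f,\phi\rangle\ge c(\epsilon)$. Let $\epsilon>0$ and let $\eta:\mathbb{R}_+\to\mathbb{R}_+$ be strictly decreasing. Then there is a constant $M_0$, depending only on $\epsilon$, $c$ and $\eta$, such that every $f\in\mathbb{R}^n$ taking values in $[0,1]$ can be written as $f=f_1+f_2+f_3$ where: $f_1$ and $f_1+f_3$ take values in $[0,1]$; $f_1=\sum_i\lambda_i\psi_i$ with $\sum_i|\lambda_i|=M\le M_0$ and each $\psi_i$ a (pointwise) product of functions in $\Phi$; $\|f_2\|\le\eta(M)$; and $\|f_3\|_2\le\epsilon$.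
   Context: Functions in $\mathbb{R}^n$ are functions on $\{1,\dots,n\}$, with $\langle f,g\rangle=\frac1n\sum_xf(x)g(x)$, $\|f\|_2=(\frac1n\sum_xf(x)^2)^{1/2}$, $\|f\|_\infty=\max_x|f(x)|$. *)

theory Defs
  imports "HOL-Analysis.Analysis"
begin

text \<open>Functions on {1..n} are represented as functions nat => real vanishing outside {1..n}.\<close>

definition Vec :: "nat \<Rightarrow> (nat \<Rightarrow> real) set" where
  "Vec n = {f. \<forall>x. x \<notin> {1..n} \<longrightarrow> f x = 0}"

definition one_vec :: "nat \<Rightarrow> nat \<Rightarrow> real" where
  "one_vec n = (\<lambda>x. if x \<in> {1..n} then 1 else 0)"

definition inner_n :: "nat \<Rightarrow> (nat \<Rightarrow> real) \<Rightarrow> (nat \<Rightarrow> real) \<Rightarrow> real" where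
  "inner_n n f g = (1 / real n) * (\<Sum>x\<in>{1..n}. f x * g x)"

definition norm2_n :: "nat \<Rightarrow> (nat \<Rightarrow> real) \<Rightarrow> real" where
  "norm2_n n f = sqrt ((1 / real n) * (\<Sum>x\<in>{1..n}. (f x)^2))"

definition norminf_n :: "nat \<Rightarrow> (nat \<Rightarrow> real) \<Rightarrow> real" where
  "norminf_n n f = Max ((\<lambda>x. \<bar>f x\<bar>) ` {1..n})"

definition is_norm_on :: "nat \<Rightarrow> ((nat \<Rightarrow> real) \<Rightarrow> real) \<Rightarrow> bool" where
  "is_norm_on n N \<longleftrightarrow>
     (\<forall>f\<in>Vec n. N f \<ge> 0) \<and>
     (\<forall>f\<in>Vec n. N f = 0 \<longleftrightarrow> f = (\<lambda>x. 0)) \<and>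
     (\<forall>f\<in>Vec n. \<forall>a::real. N (\<lambda>x. a * f x) = \<bar>a\<bar> * N f) \<and>
     (\<forall>f\<in>Vec n. \<forall>g\<in>Vec n. N (\<lambda>x. f x + g x) \<le> N f + N g)"

definition lin_span :: "(nat \<Rightarrow> real) set \<Rightarrow> (nat \<Rightarrow> real) set" where
  "lin_span S = {g. \<exists>T u. finite T \<and> T \<subseteq> S \<and> g = (\<lambda>x. \<Sum>v\<in>T. u v * v x)}"

definition is_prod_of :: "(nat \<Rightarrow> real) set \<Rightarrow> (nat \<Rightarrow> real) \<Rightarrow> bool" where
  "is_prod_of Phi psi \<longleftrightarrow>
     (\<exists>ps. ps \<noteq> [] \<and> set ps \<subseteq> Phi \<and> psi = (\<lambda>x. prod_list (map (\<lambda>p. p x) ps)))"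

end

theory Submission
  imports Defs
begin

text \<open>For a budget \<open>M\<close> let \<open>E(M)\<close> be the least mean square distance from \<open>f\<close>
  to a \<open>[0,1]\<close>-valued combination \<open>g\<close> of products of functions in \<open>\<Phi>\<close> with coefficient
  weight at most \<open>M\<close>. If \<open>\<parallel>f - g\<parallel>\<close> is large, hypothesis (iii) yields \<open>\<phi> \<in> \<Phi>\<close> with
  \<open>\<langle>f - g, \<phi>\<rangle> \<ge> \<kappa>\<close>; then \<open>g + \<kappa>\<phi>\<close> is closer to \<open>f\<close> by \<open>\<kappa>\<^sup>2\<close>, and composing it with a
  polynomial approximating the clamp to \<open>[0,1]\<close> restores the range at a controlled cost in weight.
  So along a fast-growing sequence of budgets \<open>L\<^sub>0 < L\<^sub>1 < \<dots>\<close> the energies \<open>E(L\<^sub>k) \<in> [0,1]\<close>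
  decrease, and pigeonholing gives indices \<open>i \<le> k\<close>, bounded in terms of \<open>\<epsilon>\<close>, \<open>c\<close>, \<open>\<eta>\<close> only, with
  \<open>E(L\<^sub>i) - E(L\<^sub>k)\<close> and \<open>E(L\<^sub>k) - E(L\<^sub>k\<^sub>+\<^sub>1)\<close> both small. With near-minimisers \<open>f\<^sub>1\<close> at
  budget \<open>L\<^sub>i\<close> and \<open>g\<close> at budget \<open>L\<^sub>k\<close>, take \<open>f\<^sub>2 = f - g\<close>, small in norm as otherwise \<open>E\<close> would
  drop at \<open>L\<^sub>k\<^sub>+\<^sub>1\<close>, and \<open>f\<^sub>3 = g - f\<^sub>1\<close>, small in \<open>L\<^sup>2\<close> by the parallelogram law.\<close>

definition clamp01 :: "real \<Rightarrow> real" where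
  "clamp01 x = max 0 (min 1 x)"

lemma clamp01_nearer: "v \<in> {0..1} \<Longrightarrow> \<bar>v - clamp01 y\<bar> \<le> \<bar>v - y\<bar>"
  unfolding clamp01_def by (auto simp: abs_if max_def min_def)

lemma polynomial_approx_unit_valued:
  fixes h :: "real \<Rightarrow> real"
  assumes h: "continuous_on {a..b} h" "h ` {a..b} \<subseteq> {0..1}" and \<delta>: "\<delta> > 0"
  shows "\<exists>c d. \<forall>x\<in>{a..b}. (\<Sum>m\<le>d. c m * x^m) \<in> {0..1} \<and> \<bar>(\<Sum>m\<le>d. c m * x^m) - h x\<bar> \<le> \<delta>"
proof -
  obtain q where q: "real_polynomial_function q" "\<And>x. x \<in> {a..b} \<Longrightarrow> \<bar>h x - q x\<bar> < \<delta>/2"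
    using Stone_Weierstrass_real_polynomial_function[OF compact_Icc h(1), of "\<delta>/2"] \<delta> by auto
  \<comment> \<open>Shifting by \<open>\<delta>/2\<close> and shrinking by \<open>1 + \<delta>\<close> moves the range of \<open>q\<close> into \<open>[0,1]\<close>.\<close>
  define P where "P x = (q x + \<delta>/2) / (1 + \<delta>)" for x
  have "real_polynomial_function P"
    unfolding P_def by (intro real_polynomial_function_divide real_polynomial_function.intros(3) q(1)
        real_polynomial_function.intros(2))
  then obtain c d where P_eq: "P = (\<lambda>x. \<Sum>m\<le>d. c m * x^m)"
    using real_polynomial_function_iff_sum by auto
  have "P x \<in> {0..1} \<and> \<bar>P x - h x\<bar> \<le> \<delta>" if x: "x \<in> {a..b}" for x
  proof -
    have hx: "0 \<le> h x" "h x \<le> 1" using h(2) x by (auto simp: image_subset_iff)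
    have qx: "\<bar>h x - q x\<bar> < \<delta>/2" using q(2)[OF x] .
    then have qx': "h x - \<delta>/2 < q x" "q x < h x + \<delta>/2" unfolding abs_less_iff by linarith+
    have "P x - q x = \<delta> * (1/2 - q x) / (1 + \<delta>)" unfolding P_def using \<delta> by (simp add: field_simps)
    then have "\<bar>P x - q x\<bar> = \<delta> * \<bar>1/2 - q x\<bar> / (1 + \<delta>)" using \<delta> by (simp add: abs_mult abs_divide)
    also have "\<dots> \<le> \<delta> * ((1 + \<delta>)/2) / (1 + \<delta>)"
      using qx' hx \<delta> by (intro divide_right_mono mult_left_mono) (auto simp: abs_le_iff field_simps)
    also have "\<dots> = \<delta>/2" using \<delta> by (simp add: field_simps)
    finally have "\<bar>P x - h x\<bar> \<le> \<delta>" using qx by linarith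
    moreover have "0 \<le> P x" "P x \<le> 1" unfolding P_def using qx' hx \<delta> by auto
    ultimately show ?thesis by simp
  qed
  then show ?thesis unfolding P_eq by blast
qed

text \<open>The interval \<open>[-1,2]\<close> contains every value \<open>g + \<kappa>\<phi>\<close> with \<open>0 \<le> g \<le> 1\<close> and \<open>\<bar>\<kappa>\<phi>\<bar> \<le> 1\<close>.\<close>
definition clamp_poly :: "real \<Rightarrow> (nat \<Rightarrow> real) \<times> nat" where
  "clamp_poly \<delta> = (SOME (c, d). \<forall>x\<in>{-1..2}.
     (\<Sum>m\<le>d. c m * x^m) \<in> {0..1} \<and> \<bar>(\<Sum>m\<le>d. c m * x^m) - clamp01 x\<bar> \<le> \<delta>)"

lemma clamp_poly:
  assumes "\<delta> > 0" "clamp_poly \<delta> = (c, d)" "x \<in> {-1..2}"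
  shows "(\<Sum>m\<le>d. c m * x^m) \<in> {0..1}" "\<bar>(\<Sum>m\<le>d. c m * x^m) - clamp01 x\<bar> \<le> \<delta>"
proof -
  have "continuous_on {-1..2} clamp01" unfolding clamp01_def by (intro continuous_intros)
  moreover have "clamp01 ` {-1..2} \<subseteq> {0..1}" by (auto simp: clamp01_def)
  ultimately have "\<exists>cd. case cd of (c, d) \<Rightarrow> \<forall>x\<in>{-1..2}.
      (\<Sum>m\<le>d. c m * x^m) \<in> {0..1} \<and> \<bar>(\<Sum>m\<le>d. c m * x^m) - clamp01 x\<bar> \<le> \<delta>"
    using polynomial_approx_unit_valued[of "-1" 2 clamp01 \<delta>] assms(1) by (simp add: split_paired_Ex)
  then have "case clamp_poly \<delta> of (c, d) \<Rightarrow> \<forall>x\<in>{-1..2}.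
      (\<Sum>m\<le>d. c m * x^m) \<in> {0..1} \<and> \<bar>(\<Sum>m\<le>d. c m * x^m) - clamp01 x\<bar> \<le> \<delta>"
    unfolding clamp_poly_def by (rule someI_ex)
  then show "(\<Sum>m\<le>d. c m * x^m) \<in> {0..1}" "\<bar>(\<Sum>m\<le>d. c m * x^m) - clamp01 x\<bar> \<le> \<delta>"
    using assms(2,3) by auto
qed

lemma exists_small_decrement:
  fixes e :: "nat \<Rightarrow> real"
  assumes "e a - e (a + W) \<le> 1" "1 < real W * \<gamma>"
  shows "\<exists>k\<in>{a..<a + W}. e k - e (Suc k) < \<gamma>"
proof (rule ccontr)
  assume "\<not> ?thesis"
  then have "real (card {a..<a + W}) * \<gamma> \<le> (\<Sum>k\<in>{a..<a + W}. e k - e (Suc k))"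
    by (intro sum_bounded_below) (auto simp: not_less)
  then have "real W * \<gamma> \<le> (\<Sum>k\<in>{a..<a + W}. e k - e (Suc k))" by simp
  also have "\<dots> = e a - e (a + W)"
    using sum_Suc_diff'[of a "a + W" "\<lambda>k. - e k"] by simp
  finally show False using assms by linarith
qed

fun stride_seq :: "(nat \<Rightarrow> nat) \<Rightarrow> nat \<Rightarrow> nat" where
  "stride_seq W 0 = 0"
| "stride_seq W (Suc j) = stride_seq W j + W (stride_seq W j)"

definition plateau_bound :: "(nat \<Rightarrow> real) \<Rightarrow> real \<Rightarrow> nat" where
  "plateau_bound \<gamma> \<epsilon> = stride_seq (\<lambda>a. Suc (nat \<lceil>1 / \<gamma> a\<rceil>)) (Suc (nat \<lceil>1 / \<epsilon>\<rceil>))"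

lemma one_less_Suc_ceiling_inverse_mult: "0 < t \<Longrightarrow> 1 < real (Suc (nat \<lceil>1 / t\<rceil>)) * t"
proof -
  assume t: "0 < t"
  have "1 / t + 1 \<le> real (Suc (nat \<lceil>1 / t\<rceil>))" by linarith
  then have "(1 / t + 1) * t \<le> real (Suc (nat \<lceil>1 / t\<rceil>)) * t" using t by (intro mult_right_mono) auto
  then show ?thesis using t by (simp add: field_simps)
qed

text \<open>Each stride \<open>[a, a + \<lceil>1/\<gamma> a\<rceil> + 1)\<close> contains a step losing less than \<open>\<gamma> a\<close>, and
  among the first \<open>\<lceil>1/\<epsilon>\<rceil> + 1\<close> strides one loses less than \<open>\<epsilon>\<close> in total.\<close>
lemma decseq_plateau:
  fixes e :: "nat \<Rightarrow> real"
  assumes dec: "decseq e" and range: "\<And>k. e k \<in> {0..1}" and \<gamma>: "\<And>a. 0 < \<gamma> a" and \<epsilon>: "0 < \<epsilon>"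
  shows "\<exists>i k. i \<le> k \<and> k \<le> plateau_bound \<gamma> \<epsilon> \<and> e i - e k \<le> \<epsilon> \<and> e k - e (Suc k) < \<gamma> i"
proof -
  define W where "W a = Suc (nat \<lceil>1 / \<gamma> a\<rceil>)" for a
  define R where "R = nat \<lceil>1 / \<epsilon>\<rceil>"
  define A where "A = stride_seq W"
  have e_diff: "e i - e j \<le> 1" for i j using range[of i] range[of j] by auto
  have "\<exists>j\<in>{0..<0 + Suc R}. (e \<circ> A) j - (e \<circ> A) (Suc j) < \<epsilon>"
    using e_diff one_less_Suc_ceiling_inverse_mult[OF \<epsilon>] unfolding R_def by (intro exists_small_decrement) auto
  then obtain j where j: "j < Suc R" "e (A j) - e (A (Suc j)) < \<epsilon>" by auto
  have "\<exists>k\<in>{A j..<A j + W (A j)}. e k - e (Suc k) < \<gamma> (A j)"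
    using e_diff one_less_Suc_ceiling_inverse_mult[OF \<gamma>] unfolding W_def by (intro exists_small_decrement) auto
  then obtain k where k: "A j \<le> k" "k < A j + W (A j)" "e k - e (Suc k) < \<gamma> (A j)" by auto
  have A_Suc: "A (Suc j) = A j + W (A j)" unfolding A_def by simp
  have "e (A (Suc j)) \<le> e k" using dec k(2) A_Suc by (simp add: decseqD)
  then have "e (A j) - e k \<le> \<epsilon>" using j(2) by linarith
  moreover have "incseq A" unfolding A_def by (rule incseq_SucI) simp
  then have "A (Suc j) \<le> A (Suc R)" using j(1) by (simp add: incseqD)
  then have "k \<le> plateau_bound \<gamma> \<epsilon>"
    using k(2) A_Suc unfolding plateau_bound_def A_def W_def R_def by linarith
  ultimately show ?thesis using k(1,3) by blast
qed

text \<open>A linear combination \<open>\<Sum> a\<^sub>i \<psi>\<^sub>i\<close> is kept as the list of its terms \<open>(a\<^sub>i, \<psi>\<^sub>i)\<close>;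
  its weight \<open>\<Sum> \<bar>a\<^sub>i\<bar>\<close> depends on the representation, not only on the function.\<close>
type_synonym comb = "(real \<times> (nat \<Rightarrow> real)) list"

definition comb_val :: "comb \<Rightarrow> nat \<Rightarrow> real" where
  "comb_val l x = sum_list (map (\<lambda>t. fst t * snd t x) l)"

definition comb_weight :: "comb \<Rightarrow> real" where
  "comb_weight l = sum_list (map (\<lambda>t. \<bar>fst t\<bar>) l)"

definition comb_over :: "(nat \<Rightarrow> real) set \<Rightarrow> comb \<Rightarrow> bool" where
  "comb_over Phi l \<longleftrightarrow> (\<forall>t\<in>set l. is_prod_of Phi (snd t))"

definition comb_scale :: "real \<Rightarrow> comb \<Rightarrow> comb" where
  "comb_scale r l = map (\<lambda>t. (r * fst t, snd t)) l"

definition comb_mult :: "comb \<Rightarrow> comb \<Rightarrow> comb" where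
  "comb_mult l l' = concat (map (\<lambda>t. map (\<lambda>t'. (fst t * fst t', \<lambda>x. snd t x * snd t' x)) l') l)"

text \<open>The factor \<open>u\<close> makes even the zeroth power a nonempty product.\<close>
primrec comb_power :: "(nat \<Rightarrow> real) \<Rightarrow> comb \<Rightarrow> nat \<Rightarrow> comb" where
  "comb_power u l 0 = [(1, u)]"
| "comb_power u l (Suc m) = comb_mult (comb_power u l m) l"

definition comb_poly :: "(nat \<Rightarrow> real) \<Rightarrow> nat \<Rightarrow> (nat \<Rightarrow> real) \<Rightarrow> comb \<Rightarrow> comb" where
  "comb_poly a d u l = concat (map (\<lambda>m. comb_scale (a m) (comb_power u l m)) [0..<Suc d])"

lemma comb_val_simps [simp]:
  "comb_val [] x = 0"
  "comb_val (t # l) x = fst t * snd t x + comb_val l x"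
  "comb_val (l @ l') x = comb_val l x + comb_val l' x"
  "comb_val (concat ls) x = sum_list (map (\<lambda>l. comb_val l x) ls)"
  by (induction ls) (auto simp: comb_val_def)

lemma comb_weight_simps [simp]:
  "comb_weight [] = 0"
  "comb_weight (t # l) = \<bar>fst t\<bar> + comb_weight l"
  "comb_weight (l @ l') = comb_weight l + comb_weight l'"
  "comb_weight (concat ls) = sum_list (map comb_weight ls)"
  by (induction ls) (auto simp: comb_weight_def)

lemma comb_over_simps [simp]:
  "comb_over Phi []"
  "comb_over Phi (t # l) \<longleftrightarrow> is_prod_of Phi (snd t) \<and> comb_over Phi l"
  "comb_over Phi (l @ l') \<longleftrightarrow> comb_over Phi l \<and> comb_over Phi l'"
  "comb_over Phi (concat ls) \<longleftrightarrow> (\<forall>l\<in>set ls. comb_over Phi l)"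
  by (auto simp: comb_over_def)

lemma comb_weight_nonneg: "0 \<le> comb_weight l"
  by (induction l) auto

lemma comb_val_eq_sum: "comb_val l = (\<lambda>x. \<Sum>j<length l. fst (l ! j) * snd (l ! j) x)"
  unfolding comb_val_def by (rule ext) (simp add: sum_list_sum_nth atLeast0LessThan)

lemma comb_weight_eq_sum: "comb_weight l = (\<Sum>j<length l. \<bar>fst (l ! j)\<bar>)"
  unfolding comb_weight_def by (simp add: sum_list_sum_nth atLeast0LessThan)

lemma comb_scale [simp]:
  "comb_val (comb_scale r l) x = r * comb_val l x"
  "comb_weight (comb_scale r l) = \<bar>r\<bar> * comb_weight l"
  "comb_over Phi (comb_scale r l) \<longleftrightarrow> comb_over Phi l"
  by (induction l) (auto simp: comb_scale_def algebra_simps abs_mult)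

lemma is_prod_of_single: "p \<in> Phi \<Longrightarrow> is_prod_of Phi p"
  unfolding is_prod_of_def by (intro exI[of _ "[p]"]) auto

lemma is_prod_of_mult:
  assumes "is_prod_of Phi p" "is_prod_of Phi q"
  shows "is_prod_of Phi (\<lambda>x. p x * q x)"
proof -
  obtain ps qs where "ps \<noteq> []" "set ps \<subseteq> Phi" "p = (\<lambda>x. prod_list (map (\<lambda>r. r x) ps))"
    "set qs \<subseteq> Phi" "q = (\<lambda>x. prod_list (map (\<lambda>r. r x) qs))"
    using assms unfolding is_prod_of_def by blast
  then show ?thesis unfolding is_prod_of_def by (intro exI[of _ "ps @ qs"]) auto
qed

lemma is_prod_of_Vec:
  assumes "Phi \<subseteq> Vec n" "is_prod_of Phi p"
  shows "p \<in> Vec n"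
proof -
  obtain ps where ps: "ps \<noteq> []" "set ps \<subseteq> Phi" "p = (\<lambda>x. prod_list (map (\<lambda>r. r x) ps))"
    using assms(2) unfolding is_prod_of_def by blast
  obtain r where r: "r \<in> set ps" using ps(1) by (cases ps) auto
  have "prod_list (map (\<lambda>r. r x) ps) = 0" if "x \<notin> {1..n}" for x
    using r ps(2) assms(1) that unfolding Vec_def prod_list_zero_iff by force
  then show ?thesis unfolding Vec_def ps(3) by blast
qed

lemma comb_val_Vec:
  assumes "Phi \<subseteq> Vec n" "comb_over Phi l"
  shows "comb_val l \<in> Vec n"
  using assms(2)
proof (induction l)
  case (Cons t l)
  then have "snd t \<in> Vec n" using is_prod_of_Vec[OF assms(1)] by simp
  with Cons show ?case by (simp add: Vec_def)
qed (simp add: Vec_def)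

lemma comb_mult [simp]:
  "comb_val (comb_mult l l') x = comb_val l x * comb_val l' x"
  "comb_weight (comb_mult l l') = comb_weight l * comb_weight l'"
proof -
  have "comb_val (map (\<lambda>t'. (a * fst t', \<lambda>x. p x * snd t' x)) l') x = a * p x * comb_val l' x"
    and "comb_weight (map (\<lambda>t'. (a * fst t', \<lambda>x. p x * snd t' x)) l') = \<bar>a\<bar> * comb_weight l'"
    for a p by (induction l') (auto simp: algebra_simps abs_mult)
  then show "comb_val (comb_mult l l') x = comb_val l x * comb_val l' x"
    "comb_weight (comb_mult l l') = comb_weight l * comb_weight l'"
    unfolding comb_mult_def by (induction l) (auto simp: algebra_simps)
qed

lemma comb_over_mult: "comb_over Phi l \<Longrightarrow> comb_over Phi l' \<Longrightarrow> comb_over Phi (comb_mult l l')"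
  unfolding comb_over_def comb_mult_def by (auto intro: is_prod_of_mult)

lemma comb_power:
  "comb_val (comb_power u l m) x = u x * comb_val l x ^ m"
  "comb_weight (comb_power u l m) = comb_weight l ^ m"
  "u \<in> Phi \<Longrightarrow> comb_over Phi l \<Longrightarrow> comb_over Phi (comb_power u l m)"
  by (induction m) (auto simp: comb_over_mult is_prod_of_single)

lemma comb_poly:
  "comb_val (comb_poly a d u l) x = u x * (\<Sum>m\<le>d. a m * comb_val l x ^ m)"
  "comb_weight (comb_poly a d u l) = (\<Sum>m\<le>d. \<bar>a m\<bar> * comb_weight l ^ m)"
  "u \<in> Phi \<Longrightarrow> comb_over Phi l \<Longrightarrow> comb_over Phi (comb_poly a d u l)"
  unfolding comb_poly_def
  by (simp_all add: comb_power o_def interv_sum_list_conv_sum_set_nat atLeast0LessThan lessThan_Suc_atMost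
      sum_distrib_left algebra_simps del: upt_Suc)

definition mean_sq_dist :: "nat \<Rightarrow> (nat \<Rightarrow> real) \<Rightarrow> (nat \<Rightarrow> real) \<Rightarrow> real" where
  "mean_sq_dist n f g = (1 / real n) * (\<Sum>x\<in>{1..n}. (f x - g x)^2)"

lemma mean_sq_dist_nonneg: "0 \<le> mean_sq_dist n f g"
  unfolding mean_sq_dist_def by (intro mult_nonneg_nonneg sum_nonneg) auto

lemma mean_sq_dist_le_one:
  assumes "\<forall>x\<in>{1..n}. \<bar>f x - g x\<bar> \<le> 1"
  shows "mean_sq_dist n f g \<le> 1"
proof -
  have "(\<Sum>x\<in>{1..n}. (f x - g x)^2) \<le> (\<Sum>x\<in>{1..n}. 1)"
    using assms power_le_one[of "\<bar>f _ - g _\<bar>" 2] by (intro sum_mono) simp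
  then show ?thesis unfolding mean_sq_dist_def by (cases "n = 0") (auto simp: field_simps)
qed

lemma mean_sq_dist_pointwise_le:
  assumes "1 \<le> n" "\<forall>x\<in>{1..n}. (f x - v x)^2 \<le> (f x - u x)^2 + t"
  shows "mean_sq_dist n f v \<le> mean_sq_dist n f u + t"
proof -
  have "mean_sq_dist n f v \<le> (1 / real n) * (\<Sum>x\<in>{1..n}. (f x - u x)^2 + t)"
    unfolding mean_sq_dist_def using assms by (intro mult_left_mono sum_mono) auto
  also have "\<dots> = mean_sq_dist n f u + t"
    unfolding mean_sq_dist_def sum.distrib using assms(1) by (simp add: field_simps)
  finally show ?thesis .
qed

text \<open>Expanding the square, the distance drops by \<open>2\<kappa>\<langle>f - g, \<phi>\<rangle> - \<kappa>\<^sup>2\<parallel>\<phi>\<parallel>\<^sub>2\<^sup>2 \<ge> \<kappa>\<^sup>2\<close>.\<close>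
lemma mean_sq_dist_step:
  assumes \<phi>: "\<forall>x\<in>{1..n}. \<bar>\<phi> x\<bar> \<le> 1"
    and \<kappa>: "0 \<le> \<kappa>" "\<kappa> \<le> inner_n n (\<lambda>x. f x - g x) \<phi>"
  shows "mean_sq_dist n f (\<lambda>x. g x + \<kappa> * \<phi> x) \<le> mean_sq_dist n f g - \<kappa>^2"
proof -
  have "mean_sq_dist n f (\<lambda>x. g x + \<kappa> * \<phi> x) = (1 / real n) *
      (\<Sum>x\<in>{1..n}. (f x - g x)^2 - 2 * \<kappa> * ((f x - g x) * \<phi> x) + \<kappa>^2 * (\<phi> x - 0)^2)"
    unfolding mean_sq_dist_def by (simp add: power2_eq_square algebra_simps)
  also have "\<dots> = mean_sq_dist n f g - 2 * \<kappa> * inner_n n (\<lambda>x. f x - g x) \<phi>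
      + \<kappa>^2 * mean_sq_dist n \<phi> (\<lambda>_. 0)"
    unfolding mean_sq_dist_def inner_n_def sum.distrib sum_subtractf sum_distrib_left[symmetric]
    by (simp add: algebra_simps)
  moreover have "mean_sq_dist n \<phi> (\<lambda>_. 0) \<le> 1" using \<phi> by (intro mean_sq_dist_le_one) simp
  then have "\<kappa>^2 * mean_sq_dist n \<phi> (\<lambda>_. 0) \<le> \<kappa>^2" by (simp add: mult_left_le)
  moreover have "\<kappa> * \<kappa> \<le> \<kappa> * inner_n n (\<lambda>x. f x - g x) \<phi>" using \<kappa> by (intro mult_left_mono)
  ultimately show ?thesis by (simp add: power2_eq_square)
qed

lemma norm2_n_diff_parallelogram:
  "(norm2_n n (\<lambda>x. g x - h x))^2
     = 2 * mean_sq_dist n f g + 2 * mean_sq_dist n f h - 4 * mean_sq_dist n f (\<lambda>x. (g x + h x) / 2)"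
proof -
  have "(g x - h x)^2 = 2 * (f x - g x)^2 + 2 * (f x - h x)^2 - 4 * (f x - (g x + h x) / 2)^2" for x
    by (simp add: power2_eq_square algebra_simps)
  then have sum_eq: "(\<Sum>x\<in>{1..n}. (g x - h x)^2) = 2 * (\<Sum>x\<in>{1..n}. (f x - g x)^2)
      + 2 * (\<Sum>x\<in>{1..n}. (f x - h x)^2) - 4 * (\<Sum>x\<in>{1..n}. (f x - (g x + h x) / 2)^2)"
    by (simp add: sum_subtractf sum.distrib sum_distrib_left)
  have "(norm2_n n (\<lambda>x. g x - h x))^2 = (1 / real n) * (\<Sum>x\<in>{1..n}. (g x - h x)^2)"
    unfolding norm2_n_def by (simp add: sum_nonneg)
  also have "\<dots> = 2 * mean_sq_dist n f g + 2 * mean_sq_dist n f h - 4 * mean_sq_dist n f (\<lambda>x. (g x + h x) / 2)"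
    unfolding sum_eq mean_sq_dist_def by (simp add: algebra_simps)
  finally show ?thesis .
qed

lemma norminf_n_le_iff: "1 \<le> n \<Longrightarrow> norminf_n n g \<le> r \<longleftrightarrow> (\<forall>x\<in>{1..n}. \<bar>g x\<bar> \<le> r)"
  unfolding norminf_n_def by (subst Max_le_iff) auto

text \<open>Clamping moves \<open>u\<close> towards \<open>f \<in> [0,1]\<close>, so an approximation \<open>v\<close> of the clamp is
  at most \<open>\<delta>\<close> further from \<open>f\<close> than \<open>u\<close> is.\<close>
lemma sq_dist_clamp_approx:
  assumes f: "f \<in> {0..1}" and u: "u \<in> {-1..2}" and v: "\<bar>v - clamp01 u\<bar> \<le> \<delta>" and \<delta>: "0 \<le> \<delta>" "\<delta> \<le> 1"
  shows "(f - v)^2 \<le> (f - u)^2 + 5 * \<delta>"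
proof -
  have "\<bar>f - v\<bar> \<le> \<bar>f - u\<bar> + \<delta>" using v clamp01_nearer[OF f, of u] by linarith
  then have "(f - v)^2 \<le> (\<bar>f - u\<bar> + \<delta>)^2" by (simp add: abs_le_square_iff[symmetric])
  also have "\<dots> = (f - u)^2 + \<delta> * (2 * \<bar>f - u\<bar> + \<delta>)" by (simp add: power2_eq_square algebra_simps)
  also have "\<dots> \<le> (f - u)^2 + \<delta> * 5"
  proof -
    have "\<bar>f - u\<bar> \<le> 2" using f u unfolding abs_le_iff by auto
    then show ?thesis using \<delta> by (intro add_left_mono mult_left_mono) auto
  qed
  finally show ?thesis by simp
qed

text \<open>A weight bound for the clamp polynomial applied to a combination of weight at most \<open>B + 1\<close>;
  the \<open>+ 1\<close> pays for the added term \<open>\<kappa>\<phi>\<close>.\<close>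
definition compose_cost :: "real \<Rightarrow> real \<Rightarrow> real" where
  "compose_cost \<delta> B = (case clamp_poly \<delta> of (a, d) \<Rightarrow> \<Sum>m\<le>d. \<bar>a m\<bar> * (B + 1)^m)"

text \<open>One step of the energy increment: add \<open>\<kappa>\<phi>\<close>, then compose with the clamp polynomial
  to return to \<open>[0,1]\<close>-valued combinations.\<close>
lemma comb_increment:
  assumes n: "1 \<le> n" and one: "one_vec n \<in> Phi" and bounded: "\<forall>\<phi>\<in>Phi. norminf_n n \<phi> \<le> 1"
    and f: "\<forall>x\<in>{1..n}. f x \<in> {0..1}"
    and l: "comb_over Phi l" "comb_weight l \<le> B" "\<forall>x\<in>{1..n}. comb_val l x \<in> {0..1}"
    and \<phi>: "\<phi> \<in> Phi" "\<kappa> \<le> inner_n n (\<lambda>x. f x - comb_val l x) \<phi>"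
    and \<kappa>: "0 < \<kappa>" "\<kappa> \<le> 1" and \<delta>: "0 < \<delta>" "\<delta> \<le> \<kappa>^2 / 10"
  shows "\<exists>l'. comb_over Phi l' \<and> comb_weight l' \<le> compose_cost \<delta> B \<and>
           (\<forall>x\<in>{1..n}. comb_val l' x \<in> {0..1}) \<and>
           mean_sq_dist n f (comb_val l') \<le> mean_sq_dist n f (comb_val l) - \<kappa>^2 / 2"
proof -
  obtain a d where ad: "clamp_poly \<delta> = (a, d)" by fastforce
  define lu where "lu = l @ [(\<kappa>, \<phi>)]"
  define l' where "l' = comb_poly a d (one_vec n) lu"
  have \<phi>_le: "\<bar>\<phi> x\<bar> \<le> 1" if "x \<in> {1..n}" for x
    using bounded \<phi>(1) norminf_n_le_iff[OF n] that by blast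
  have lu_val: "comb_val lu = (\<lambda>x. comb_val l x + \<kappa> * \<phi> x)" unfolding lu_def by auto
  have lu_range: "comb_val lu x \<in> {-1..2}" if x: "x \<in> {1..n}" for x
  proof -
    have "\<bar>\<kappa> * \<phi> x\<bar> \<le> 1" using \<phi>_le[OF x] \<kappa> by (simp add: abs_mult mult_le_one)
    moreover have "comb_val l x \<in> {0..1}" using l(3) x by blast
    ultimately show ?thesis unfolding lu_val by (auto simp: abs_le_iff)
  qed
  have l'_val: "comb_val l' x = (\<Sum>m\<le>d. a m * comb_val lu x ^ m)" if "x \<in> {1..n}" for x
    using that unfolding l'_def comb_poly by (simp add: one_vec_def)
  have "comb_over Phi l'"
    unfolding l'_def using one l(1) \<phi>(1) by (intro comb_poly) (auto simp: lu_def is_prod_of_single)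
  moreover have "comb_weight l' \<le> compose_cost \<delta> B"
  proof -
    have "comb_weight lu \<le> B + 1" using l(2) \<kappa> unfolding lu_def by simp
    then show ?thesis unfolding l'_def comb_poly compose_cost_def ad
      using comb_weight_nonneg[of lu] by (auto intro!: sum_mono mult_left_mono power_mono)
  qed
  moreover have "\<forall>x\<in>{1..n}. comb_val l' x \<in> {0..1}"
    using clamp_poly(1)[OF \<delta>(1) ad lu_range] l'_val by simp
  moreover have "mean_sq_dist n f (comb_val l') \<le> mean_sq_dist n f (comb_val lu) + 5 * \<delta>"
  proof (intro mean_sq_dist_pointwise_le[OF n] ballI)
    fix x assume x: "x \<in> {1..n}"
    have "\<delta> \<le> 1" using \<delta>(2) \<kappa> power_le_one[of \<kappa> 2] by linarith
    then show "(f x - comb_val l' x)^2 \<le> (f x - comb_val lu x)^2 + 5 * \<delta>"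
      using sq_dist_clamp_approx f clamp_poly(2)[OF \<delta>(1) ad lu_range] l'_val x \<delta>(1) lu_range by simp
  qed
  moreover have "mean_sq_dist n f (comb_val lu) \<le> mean_sq_dist n f (comb_val l) - \<kappa>^2"
    unfolding lu_val using \<phi>_le \<phi>(2) \<kappa>(1) by (intro mean_sq_dist_step) auto
  ultimately show ?thesis using \<delta>(2) by (intro exI[of _ l']) auto
qed

locale decomposition_params =
  fixes c \<eta> :: "real \<Rightarrow> real"
  assumes c_range: "\<forall>t\<in>{0<..1}. c t \<in> {0<..1}"
    and c_mono: "strict_mono_on {0<..1} c"
    and eta_range: "\<forall>t\<ge>0. \<eta> t \<ge> 0"
    and eta_mono: "\<forall>s t. 0 \<le> s \<and> s < t \<longrightarrow> \<eta> t < \<eta> s"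
begin

text \<open>The correlation that hypothesis (iii) guarantees once \<open>\<parallel>f - g\<parallel> > \<eta> A\<close>; the threshold is
  capped at \<open>1\<close> because (iii) only speaks about thresholds in \<open>(0,1]\<close>.\<close>
definition step_size :: "real \<Rightarrow> real" where
  "step_size A = c (min (\<eta> A) 1)"

definition next_budget :: "real \<Rightarrow> real" where
  "next_budget B = max (B + 1) (compose_cost (step_size B ^ 2 / 10) B)"

definition budget :: "nat \<Rightarrow> real" where
  "budget k = (next_budget ^^ k) 0"

definition budget_bound :: "real \<Rightarrow> real" where
  "budget_bound \<epsilon> = budget (plateau_bound (\<lambda>k. step_size (budget k) ^ 2 / 4) (\<epsilon>^2 / 4))"

lemma eta_pos:
  assumes "0 \<le> t"
  shows "0 < \<eta> t"
proof -
  have "\<eta> (t + 1) < \<eta> t" using eta_mono assms by simp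
  moreover have "0 \<le> \<eta> (t + 1)" using eta_range assms by simp
  ultimately show ?thesis by linarith
qed

lemma eta_antimono: "0 \<le> s \<Longrightarrow> s \<le> t \<Longrightarrow> \<eta> t \<le> \<eta> s"
  using eta_mono by (cases "s = t") (auto intro: less_imp_le)

lemma step_size_pos: "0 \<le> A \<Longrightarrow> 0 < step_size A"
  and step_size_le_one: "0 \<le> A \<Longrightarrow> step_size A \<le> 1"
  unfolding step_size_def using c_range eta_pos[of A] by auto

lemma step_size_antimono:
  assumes "0 \<le> A" "A \<le> A'"
  shows "step_size A' \<le> step_size A"
  unfolding step_size_def using eta_antimono[OF assms] eta_pos assms
  by (intro strict_mono_on_leD[OF c_mono]) auto

lemma budget_Suc: "budget (Suc k) = next_budget (budget k)"
  unfolding budget_def by simp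

lemma incseq_budget: "incseq budget"
  by (rule incseq_SucI) (simp add: budget_Suc next_budget_def)

lemma budget_nonneg: "0 \<le> budget k"
  using incseqD[OF incseq_budget, of 0 k] by (simp add: budget_def)

end

locale decomposition_setting = decomposition_params +
  fixes n :: nat and N :: "(nat \<Rightarrow> real) \<Rightarrow> real" and Phi :: "(nat \<Rightarrow> real) set" and f :: "nat \<Rightarrow> real"
  assumes n_pos: "1 \<le> n"
    and Phi_Vec: "Phi \<subseteq> Vec n"
    and one_in_Phi: "one_vec n \<in> Phi"
    and Phi_bounded: "\<forall>\<phi>\<in>Phi. norminf_n n \<phi> \<le> 1"
    and correlation: "\<forall>g\<in>Vec n. \<forall>e\<in>{0<..1}. norminf_n n g \<le> 1 \<and> N g \<ge> e \<longrightarrow>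
                        (\<exists>\<phi>\<in>Phi. inner_n n g \<phi> \<ge> c e)"
    and f_Vec: "f \<in> Vec n"
    and f_range: "\<forall>x\<in>{1..n}. f x \<in> {0..1}"
begin

definition admissible :: "real \<Rightarrow> comb \<Rightarrow> bool" where
  "admissible M l \<longleftrightarrow> comb_over Phi l \<and> comb_weight l \<le> M \<and> (\<forall>x\<in>{1..n}. comb_val l x \<in> {0..1})"

definition energy :: "real \<Rightarrow> real" where
  "energy M = Inf {mean_sq_dist n f (comb_val l) | l. admissible M l}"

lemma admissible_Nil: "0 \<le> M \<Longrightarrow> admissible M []"
  by (simp add: admissible_def)

lemma admissible_mono: "admissible M l \<Longrightarrow> M \<le> M' \<Longrightarrow> admissible M' l"
  by (simp add: admissible_def)

lemma bdd_below_energy_set: "bdd_below {mean_sq_dist n f (comb_val l) | l. admissible M l}"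
  by (rule bdd_belowI[of _ 0]) (auto simp: mean_sq_dist_nonneg)

lemma energy_le: "admissible M l \<Longrightarrow> energy M \<le> mean_sq_dist n f (comb_val l)"
  unfolding energy_def by (rule cInf_lower[OF _ bdd_below_energy_set]) blast

lemma energy_approx:
  assumes "0 \<le> M" "0 < s"
  shows "\<exists>l. admissible M l \<and> mean_sq_dist n f (comb_val l) < energy M + s"
proof -
  have "{mean_sq_dist n f (comb_val l) | l. admissible M l} \<noteq> {}"
    using admissible_Nil[OF assms(1)] by blast
  from cInf_lessD[OF this, of "energy M + s"] show ?thesis
    using assms(2) unfolding energy_def by auto
qed

lemma energy_antimono: "0 \<le> M \<Longrightarrow> M \<le> M' \<Longrightarrow> energy M' \<le> energy M"
  unfolding energy_def using admissible_Nil admissible_mono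
  by (intro cInf_superset_mono bdd_below_energy_set) blast+

lemma energy_range:
  assumes "0 \<le> M"
  shows "energy M \<in> {0..1}"
proof -
  have "energy M \<le> 1"
    using energy_le[OF admissible_Nil[OF assms]] f_range mean_sq_dist_le_one[of n f "comb_val []"] by auto
  moreover have "0 \<le> energy M" unfolding energy_def using admissible_Nil[OF assms]
    by (intro cInf_greatest) (auto simp: mean_sq_dist_nonneg)
  ultimately show ?thesis by simp
qed

lemma energy_drop_if_far:
  assumes ik: "i \<le> k" and l: "admissible (budget k) l"
    and far: "\<eta> (budget i) < N (\<lambda>x. f x - comb_val l x)"
  shows "energy (budget (Suc k)) \<le> mean_sq_dist n f (comb_val l) - step_size (budget i)^2 / 2"
proof -
  let ?g = "\<lambda>x. f x - comb_val l x" and ?\<kappa> = "step_size (budget i)"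
  have l_Vec: "comb_val l \<in> Vec n" using l Phi_Vec comb_val_Vec by (auto simp: admissible_def)
  have "\<exists>\<phi>\<in>Phi. inner_n n ?g \<phi> \<ge> ?\<kappa>"
    unfolding step_size_def
  proof (rule correlation[rule_format])
    show "?g \<in> Vec n" using f_Vec l_Vec by (simp add: Vec_def)
    show "min (\<eta> (budget i)) 1 \<in> {0<..1}" using eta_pos[OF budget_nonneg] by auto
    have "\<bar>?g x\<bar> \<le> 1" if "x \<in> {1..n}" for x
      using f_range l that unfolding admissible_def by (fastforce simp: abs_le_iff)
    then show "norminf_n n ?g \<le> 1 \<and> min (\<eta> (budget i)) 1 \<le> N ?g"
      using far norminf_n_le_iff[OF n_pos] by auto
  qed
  then obtain \<phi> where \<phi>: "\<phi> \<in> Phi" "?\<kappa> \<le> inner_n n ?g \<phi>" by blast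
  have \<kappa>: "0 < ?\<kappa>" "?\<kappa> \<le> 1" using step_size_pos step_size_le_one budget_nonneg by auto
  have "0 < step_size (budget k)" using step_size_pos budget_nonneg by auto
  moreover have "step_size (budget k) \<le> ?\<kappa>"
    using step_size_antimono budget_nonneg incseqD[OF incseq_budget ik] by blast
  ultimately have \<delta>: "0 < step_size (budget k)^2 / 10" "step_size (budget k)^2 / 10 \<le> ?\<kappa>^2 / 10"
    by (auto intro: power_mono)
  have l_parts: "comb_over Phi l" "comb_weight l \<le> budget k" "\<forall>x\<in>{1..n}. comb_val l x \<in> {0..1}"
    using l unfolding admissible_def by auto
  obtain l' where l': "comb_over Phi l'"
    "comb_weight l' \<le> compose_cost (step_size (budget k)^2 / 10) (budget k)"
    "\<forall>x\<in>{1..n}. comb_val l' x \<in> {0..1}"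
    "mean_sq_dist n f (comb_val l') \<le> mean_sq_dist n f (comb_val l) - ?\<kappa>^2 / 2"
    using comb_increment[OF n_pos one_in_Phi Phi_bounded f_range l_parts \<phi> \<kappa> \<delta>] by blast
  then have "admissible (budget (Suc k)) l'"
    unfolding admissible_def budget_Suc next_budget_def by auto
  then show ?thesis using energy_le l'(4) by (meson order_trans)
qed

lemma near_minimiser_close_in_norm:
  assumes "i \<le> k" "admissible (budget k) l"
    and "energy (budget k) - energy (budget (Suc k)) < step_size (budget i)^2 / 4"
    and "mean_sq_dist n f (comb_val l) < energy (budget k) + step_size (budget i)^2 / 4"
  shows "N (\<lambda>x. f x - comb_val l x) \<le> \<eta> (budget i)"
proof (rule ccontr)
  assume "\<not> ?thesis"
  then have "energy (budget (Suc k)) \<le> mean_sq_dist n f (comb_val l) - step_size (budget i)^2 / 2"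
    using energy_drop_if_far[OF assms(1,2)] by simp
  then show False using assms(3,4) by linarith
qed

text \<open>Near-minimisers at two budgets with almost equal energies are close in \<open>L\<^sup>2\<close>: their midpoint
  is admissible at the larger budget, so the parallelogram law applies.\<close>
lemma near_minimisers_close_in_L2:
  assumes "A \<le> B" "admissible A l" "admissible B l'" "0 < \<epsilon>"
    and "mean_sq_dist n f (comb_val l) < energy A + \<epsilon>^2 / 8"
    and "mean_sq_dist n f (comb_val l') < energy B + \<epsilon>^2 / 8"
    and "energy A - energy B \<le> \<epsilon>^2 / 4"
  shows "norm2_n n (\<lambda>x. comb_val l' x - comb_val l x) \<le> \<epsilon>"
proof -
  define m where "m = comb_scale (1/2) (l' @ l)"
  have m_val: "comb_val m = (\<lambda>x. (comb_val l' x + comb_val l x) / 2)" by (auto simp: m_def)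
  have "comb_weight m \<le> B" using assms(1-3) by (simp add: m_def admissible_def)
  moreover have "comb_val m x \<in> {0..1}" if "x \<in> {1..n}" for x
    using assms(2,3) that unfolding m_val admissible_def by fastforce
  ultimately have "admissible B m" using assms(2,3) by (simp add: admissible_def m_def)
  then have "energy B \<le> mean_sq_dist n f (comb_val m)" by (rule energy_le)
  then have "(norm2_n n (\<lambda>x. comb_val l' x - comb_val l x))^2 \<le> \<epsilon>^2"
    using assms(5-7) unfolding norm2_n_diff_parallelogram[where f = f] m_val by linarith
  then show ?thesis using assms(4) by (simp add: power2_le_iff_abs_le)
qed

lemma decomposition_combs:
  assumes \<epsilon>: "0 < \<epsilon>"
  shows "\<exists>l l'. admissible (budget_bound \<epsilon>) l \<and> admissible (budget_bound \<epsilon>) l' \<and>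
           N (\<lambda>x. f x - comb_val l' x) \<le> \<eta> (comb_weight l) \<and>
           norm2_n n (\<lambda>x. comb_val l' x - comb_val l x) \<le> \<epsilon>"
proof -
  define \<gamma> where "\<gamma> = (\<lambda>k. step_size (budget k)^2 / 4)"
  have "(energy \<circ> budget) (Suc k) \<le> (energy \<circ> budget) k" for k
    using energy_antimono[OF budget_nonneg] incseqD[OF incseq_budget, of k "Suc k"] by simp
  then have dec: "decseq (energy \<circ> budget)" by (rule decseq_SucI)
  have range: "(energy \<circ> budget) k \<in> {0..1}" for k using energy_range[OF budget_nonneg] by simp
  have \<gamma>_pos: "0 < \<gamma> k" for k unfolding \<gamma>_def using step_size_pos[OF budget_nonneg, of k] by simp
  have "\<exists>i k. i \<le> k \<and> k \<le> plateau_bound \<gamma> (\<epsilon>^2 / 4) \<and>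
      (energy \<circ> budget) i - (energy \<circ> budget) k \<le> \<epsilon>^2 / 4 \<and>
      (energy \<circ> budget) k - (energy \<circ> budget) (Suc k) < \<gamma> i"
    by (rule decseq_plateau[where \<gamma> = \<gamma>, OF dec range \<gamma>_pos]) (use \<epsilon> in simp)
  then obtain i k where ik: "i \<le> k" "k \<le> plateau_bound \<gamma> (\<epsilon>^2 / 4)"
    "energy (budget i) - energy (budget k) \<le> \<epsilon>^2 / 4"
    "energy (budget k) - energy (budget (Suc k)) < \<gamma> i"
    by auto
  have "budget_bound \<epsilon> = budget (plateau_bound \<gamma> (\<epsilon>^2 / 4))" by (simp add: budget_bound_def \<gamma>_def)
  then have budgets: "budget i \<le> budget k" "budget k \<le> budget_bound \<epsilon>"
    using incseqD[OF incseq_budget ik(1)] incseqD[OF incseq_budget ik(2)] by simp_all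
  obtain l where l: "admissible (budget i) l"
    "mean_sq_dist n f (comb_val l) < energy (budget i) + \<epsilon>^2 / 8"
    using energy_approx[OF budget_nonneg[of i], of "\<epsilon>^2 / 8"] \<epsilon> by auto
  obtain l' where l': "admissible (budget k) l'"
    "mean_sq_dist n f (comb_val l') < energy (budget k) + min (\<epsilon>^2 / 8) (\<gamma> i)"
    using energy_approx[OF budget_nonneg[of k], of "min (\<epsilon>^2 / 8) (\<gamma> i)"] \<epsilon> \<gamma>_pos by auto
  have "N (\<lambda>x. f x - comb_val l' x) \<le> \<eta> (budget i)"
    using near_minimiser_close_in_norm[OF ik(1) l'(1)] ik(4) l'(2) unfolding \<gamma>_def by linarith
  also have "\<dots> \<le> \<eta> (comb_weight l)"
    using l(1) comb_weight_nonneg by (intro eta_antimono) (auto simp: admissible_def)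
  moreover have "norm2_n n (\<lambda>x. comb_val l' x - comb_val l x) \<le> \<epsilon>"
    using near_minimisers_close_in_L2[OF budgets(1) l(1) l'(1) \<epsilon> l(2) _ ik(3)] l'(2) by linarith
  moreover have "admissible (budget_bound \<epsilon>) l" "admissible (budget_bound \<epsilon>) l'"
    using admissible_mono[OF l(1)] admissible_mono[OF l'(1)] budgets by auto
  ultimately show ?thesis by (intro exI[of _ l] exI[of _ l']) simp
qed

lemma decomposition:
  assumes "0 < \<epsilon>"
  shows "\<exists>f1 f2 f3 (k::nat) (lam::nat \<Rightarrow> real) (psi::nat \<Rightarrow> nat \<Rightarrow> real) M.
           f1 \<in> Vec n \<and> f2 \<in> Vec n \<and> f3 \<in> Vec n \<and>
           f = (\<lambda>x. f1 x + f2 x + f3 x) \<and>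
           (\<forall>x\<in>{1..n}. f1 x \<in> {0..1} \<and> f1 x + f3 x \<in> {0..1}) \<and>
           (\<forall>i<k. is_prod_of Phi (psi i)) \<and>
           f1 = (\<lambda>x. \<Sum>i<k. lam i * psi i x) \<and>
           M = (\<Sum>i<k. \<bar>lam i\<bar>) \<and> M \<le> budget_bound \<epsilon> \<and>
           N f2 \<le> \<eta> M \<and> norm2_n n f3 \<le> \<epsilon>"
proof -
  obtain l l' where l: "admissible (budget_bound \<epsilon>) l" and l': "admissible (budget_bound \<epsilon>) l'"
    and far: "N (\<lambda>x. f x - comb_val l' x) \<le> \<eta> (comb_weight l)"
    and close: "norm2_n n (\<lambda>x. comb_val l' x - comb_val l x) \<le> \<epsilon>"
    using decomposition_combs[OF assms] by blast
  have Vecs: "comb_val l \<in> Vec n" "comb_val l' \<in> Vec n"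
    using l l' Phi_Vec comb_val_Vec unfolding admissible_def by blast+
  show ?thesis
  proof (intro exI conjI)
    show "comb_val l \<in> Vec n" "(\<lambda>x. f x - comb_val l' x) \<in> Vec n"
      "(\<lambda>x. comb_val l' x - comb_val l x) \<in> Vec n"
      using Vecs f_Vec by (auto simp: Vec_def)
    show "\<forall>x\<in>{1..n}. comb_val l x \<in> {0..1} \<and> comb_val l x + (comb_val l' x - comb_val l x) \<in> {0..1}"
      using l l' by (simp add: admissible_def)
    show "\<forall>j<length l. is_prod_of Phi (snd (l ! j))"
      using l by (simp add: admissible_def comb_over_def)
    show "comb_weight l \<le> budget_bound \<epsilon>" using l by (simp add: admissible_def)
  qed (use far close in \<open>auto simp: comb_val_eq_sum comb_weight_eq_sum\<close>)
qed

end

theorem theorem5p8: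
  fixes \<epsilon> :: real and c :: "real \<Rightarrow> real" and \<eta> :: "real \<Rightarrow> real"
  assumes eps: "\<epsilon> > 0"
    and c_range: "\<forall>t\<in>{0<..1}. c t \<in> {0<..1}"
    and c_mono: "strict_mono_on {0<..1} c"
    and eta_range: "\<forall>t\<ge>0. \<eta> t \<ge> 0"
    and eta_mono: "\<forall>s t. 0 \<le> s \<and> s < t \<longrightarrow> \<eta> t < \<eta> s"
  shows "\<exists>M0::real. \<forall>(n::nat) (N::(nat \<Rightarrow> real) \<Rightarrow> real) (Phi::(nat \<Rightarrow> real) set).
     n \<ge> 1 \<and> is_norm_on n N \<and> Phi \<subseteq> Vec n \<and>
     one_vec n \<in> Phi \<and> (\<forall>\<phi>\<in>Phi. (\<lambda>x. - \<phi> x) \<in> Phi) \<and>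
     (\<forall>\<phi>\<in>Phi. norminf_n n \<phi> \<le> 1) \<and> lin_span Phi = Vec n \<and>
     (\<forall>f\<in>Vec n. N f \<le> 1 \<longrightarrow> (\<forall>\<phi>\<in>Phi. inner_n n f \<phi> \<le> 1)) \<and>
     (\<forall>f\<in>Vec n. \<forall>e\<in>{0<..1}. norminf_n n f \<le> 1 \<and> N f \<ge> e \<longrightarrow>
         (\<exists>\<phi>\<in>Phi. inner_n n f \<phi> \<ge> c e))
     \<longrightarrow>
     (\<forall>f\<in>Vec n. (\<forall>x\<in>{1..n}. f x \<in> {0..1}) \<longrightarrow>
        (\<exists>f1 f2 f3 (k::nat) (lam::nat \<Rightarrow> real) (psi::nat \<Rightarrow> nat \<Rightarrow> real) M.
           f1 \<in> Vec n \<and> f2 \<in> Vec n \<and> f3 \<in> Vec n \<and>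
           f = (\<lambda>x. f1 x + f2 x + f3 x) \<and>
           (\<forall>x\<in>{1..n}. f1 x \<in> {0..1} \<and> f1 x + f3 x \<in> {0..1}) \<and>
           (\<forall>i<k. is_prod_of Phi (psi i)) \<and>
           f1 = (\<lambda>x. \<Sum>i<k. lam i * psi i x) \<and>
           M = (\<Sum>i<k. \<bar>lam i\<bar>) \<and> M \<le> M0 \<and>
           N f2 \<le> \<eta> M \<and> norm2_n n f3 \<le> \<epsilon>))"
proof -
  have "decomposition_params c \<eta>"
    using c_range c_mono eta_range eta_mono by unfold_locales
  then show ?thesis
    by (intro exI[of _ "decomposition_params.budget_bound c \<eta> \<epsilon>"] allI impI ballI
        decomposition_setting.decomposition[OF _ eps])
      (simp add: decomposition_setting_def decomposition_setting_axioms_def)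
qed

end
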